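(* Let $G=(V,E)$ be a connected almost bipartite permutation graph that contains a hole, let $C$ be a shortest hole, $m=|C|$, $c_0,\dots,c_{m-1}$ its vertices in cyclic order (indices modulo $m$), and for each $i$ let $A_i=\{v\in V: N(v)\cap C=\{c_{i-1},c_{i+1}\}\}$ and $B_i=\{v\in V: N(v)\cap C=\{c_i\}\}$ (indices modulo $m$). Let $i\in\{0,\dots,m-1\}$ and let $(p,q)\in\{(i-2,i-1),(i+2,i+1)\}$. Then: (1) For every $w,w'\in B_p\cup A_q$ the sets $N(w)\cap A_i$ and $N(w')\cap A_i$ are comparable with respect to inclusion; moreover, if $w\in B_p$ and $w'\in A_q$, then $N(w)\cap A_i\subseteq N(w')\cap A_i$. (2) For every $u,u'\in A_p\cup B_q$ the sets $N(u)\cap B_i$ and $N(u')\cap B_i$ are comparable with respect to inclusion; moreover, if $u\in A_p$ and $u'\in B_q$, then $N(u)\cap B_i\subseteq N(u')\cap B_i$.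
   Context: All graphs are finite, simple, undirected; $N(v)$ is the open neighborhood of $v$. A hole is an induced cycle on at least five vertices. $K_3$ is the triangle, $C_k$ the cycle on $k$ vertices. $T_2$ is the tree on 7 vertices obtained from the claw $K_{1,3}$ by subdividing each edge once. $X_2$ is the 7-vertex graph obtained from a 4-cycle by attaching one new pendant vertex to each of three of its four vertices. $X_3$ is the 7-vertex graph obtained from the domino (two 4-cycles sharing exactly one edge) by attaching one new pendant vertex to one endpoint of the shared edge. A graph is an almost bipartite permutation graph if it contains none of $T_2, X_2, X_3, K_3, C_5,\dots,C_9$ as an induced subgraph. *)

theory Defs
  imports Main
begin

definition simple_graph :: "'a set \<Rightarrow> ('a \<Rightarrow> 'a \<Rightarrow> bool) \<Rightarrow> bool" where
  "simple_graph V E \<longleftrightarrow> finite V \<and> (\<forall>x y. E x y \<longrightarrow> E y x)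
     \<and> (\<forall>x. \<not> E x x) \<and> (\<forall>x y. E x y \<longrightarrow> x \<in> V \<and> y \<in> V)"

definition connected_graph :: "'a set \<Rightarrow> ('a \<Rightarrow> 'a \<Rightarrow> bool) \<Rightarrow> bool" where
  "connected_graph V E \<longleftrightarrow> (\<forall>x\<in>V. \<forall>y\<in>V. E\<^sup>*\<^sup>* x y)"

definition nbhd :: "('a \<Rightarrow> 'a \<Rightarrow> bool) \<Rightarrow> 'a \<Rightarrow> 'a set" where
  "nbhd E v = {u. E v u}"

definition contains_induced ::
  "'a set \<Rightarrow> ('a \<Rightarrow> 'a \<Rightarrow> bool) \<Rightarrow> nat \<Rightarrow> (nat \<Rightarrow> nat \<Rightarrow> bool) \<Rightarrow> bool" where
  "contains_induced V E k H \<longleftrightarrow> (\<exists>f. inj_on f {0..<k} \<and> f ` {0..<k} \<subseteq> V \<and>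
      (\<forall>i<k. \<forall>j<k. E (f i) (f j) \<longleftrightarrow> H i j))"

definition graph_of_edges :: "(nat \<times> nat) list \<Rightarrow> nat \<Rightarrow> nat \<Rightarrow> bool" where
  "graph_of_edges es i j \<longleftrightarrow> (i, j) \<in> set es \<or> (j, i) \<in> set es"

definition cycle_graph :: "nat \<Rightarrow> nat \<Rightarrow> nat \<Rightarrow> bool" where
  "cycle_graph k i j \<longleftrightarrow> i < k \<and> j < k \<and> (j = (i + 1) mod k \<or> i = (j + 1) mod k)"

definition K3 :: "nat \<Rightarrow> nat \<Rightarrow> bool" where
  "K3 = graph_of_edges [(0,1),(1,2),(0,2)]"

text \<open>T2: claw with centre 0, each edge subdivided once.\<close>
definition T2 :: "nat \<Rightarrow> nat \<Rightarrow> bool" where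
  "T2 = graph_of_edges [(0,1),(1,2),(0,3),(3,4),(0,5),(5,6)]"

text \<open>X2: 4-cycle 0-1-2-3 with pendants 4,5,6 at 0,1,2.\<close>
definition X2 :: "nat \<Rightarrow> nat \<Rightarrow> bool" where
  "X2 = graph_of_edges [(0,1),(1,2),(2,3),(3,0),(4,0),(5,1),(6,2)]"

text \<open>X3: domino (4-cycles 0-1-2-3 and 1-2-4-5 sharing edge 1-2) with a
  pendant 6 at the endpoint 1 of the shared edge.\<close>
definition X3 :: "nat \<Rightarrow> nat \<Rightarrow> bool" where
  "X3 = graph_of_edges [(0,1),(1,2),(2,3),(3,0),(2,4),(4,5),(5,1),(6,1)]"

definition almost_bipartite_permutation :: "'a set \<Rightarrow> ('a \<Rightarrow> 'a \<Rightarrow> bool) \<Rightarrow> bool" where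
  "almost_bipartite_permutation V E \<longleftrightarrow>
     \<not> contains_induced V E 7 T2 \<and> \<not> contains_induced V E 7 X2 \<and>
     \<not> contains_induced V E 7 X3 \<and> \<not> contains_induced V E 3 K3 \<and>
     (\<forall>k\<in>{5..9}. \<not> contains_induced V E k (cycle_graph k))"

definition is_hole :: "'a set \<Rightarrow> ('a \<Rightarrow> 'a \<Rightarrow> bool) \<Rightarrow> (nat \<Rightarrow> 'a) \<Rightarrow> nat \<Rightarrow> bool" where
  "is_hole V E c m \<longleftrightarrow> m \<ge> 5 \<and> inj_on c {0..<m} \<and> c ` {0..<m} \<subseteq> V \<and>
     (\<forall>i<m. \<forall>j<m. E (c i) (c j) \<longleftrightarrow> cycle_graph m i j)"

definition cyc :: "(nat \<Rightarrow> 'a) \<Rightarrow> nat \<Rightarrow> int \<Rightarrow> 'a" where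
  "cyc c m i = c (nat (i mod int m))"

definition Aset :: "'a set \<Rightarrow> ('a \<Rightarrow> 'a \<Rightarrow> bool) \<Rightarrow> (nat \<Rightarrow> 'a) \<Rightarrow> nat \<Rightarrow> int \<Rightarrow> 'a set" where
  "Aset V E c m i = {v \<in> V. nbhd E v \<inter> c ` {0..<m} = {cyc c m (i - 1), cyc c m (i + 1)}}"

definition Bset :: "'a set \<Rightarrow> ('a \<Rightarrow> 'a \<Rightarrow> bool) \<Rightarrow> (nat \<Rightarrow> 'a) \<Rightarrow> nat \<Rightarrow> int \<Rightarrow> 'a set" where
  "Bset V E c m i = {v \<in> V. nbhd E v \<inter> c ` {0..<m} = {cyc c m i}}"

end

theory Submission
  imports Defs
begin

text \<open>As \<open>C5, ..., C9\<close> are excluded, the hole has length at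
  least 10, so near \<open>c i\<close> it is an induced path \<open>y k = c (i + k d)\<close>; taking \<open>d = 1\<close> or \<open>d = -1\<close>
  reduces both choices of \<open>(p, q)\<close> to \<open>p = i - 2d\<close>, \<open>q = i - d\<close>. Two vertices adjacent to
  \<open>c p\<close> but not to \<open>c (i + d)\<close> whose neighbourhoods in \<open>A i\<close> are incomparable close an induced
  \<open>C6\<close> through \<open>c p\<close> and \<open>c (i + d)\<close>, every chord being excluded by triangle-freeness; adding
  \<open>c i\<close> to \<open>A i\<close> separates \<open>B p\<close> from \<open>A q\<close>. On the \<open>B i\<close> side the same situation yields
  an induced \<open>X3\<close> on the edge \<open>c q c i\<close>, and a vertex of \<open>B i\<close> seen from \<open>A p\<close> but not from
  \<open>B q\<close> an induced \<open>X2\<close> with pendants \<open>c (i - 3d)\<close>, the \<open>B q\<close>-vertex and \<open>c (i + d)\<close>.\<close>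

lemma simple_graph_sym: "simple_graph V E \<Longrightarrow> E x y \<Longrightarrow> E y x"
  unfolding simple_graph_def by blast

lemma simple_graph_irrefl: "simple_graph V E \<Longrightarrow> \<not> E x x"
  unfolding simple_graph_def by blast

lemma simple_graph_edge_in_V: "simple_graph V E \<Longrightarrow> E x y \<Longrightarrow> x \<in> V \<and> y \<in> V"
  unfolding simple_graph_def by blast

lemma contains_induced_of_list:
  assumes G: "simple_graph V E" and pattern: "\<And>i j. H i j \<Longrightarrow> H j i" "\<And>i. \<not> H i i"
    and xs: "length xs = k" "distinct xs" "set xs \<subseteq> V"
    and adj: "\<forall>i<k. \<forall>j<k. i < j \<longrightarrow> (E (xs ! i) (xs ! j) \<longleftrightarrow> H i j)"
  shows "contains_induced V E k H"
  unfolding contains_induced_def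
proof (intro exI conjI)
  show "inj_on ((!) xs) {0..<k}"
    using xs(1,2) by (auto simp: inj_on_def nth_eq_iff_index_eq)
  show "\<forall>i<k. \<forall>j<k. E (xs ! i) (xs ! j) \<longleftrightarrow> H i j"
  proof (intro allI impI)
    fix i j assume "i < k" "j < k"
    then consider "i < j" | "i = j" | "j < i" by linarith
    then show "E (xs ! i) (xs ! j) \<longleftrightarrow> H i j"
      using adj \<open>i < k\<close> \<open>j < k\<close> pattern simple_graph_sym[OF G] simple_graph_irrefl[OF G]
      by cases blast+
  qed
qed (use xs in auto)

lemma all_less_6:
  "(\<forall>i<(6::nat). P i) \<longleftrightarrow> P 0 \<and> P 1 \<and> P 2 \<and> P 3 \<and> P 4 \<and> P 5"
  by (simp add: numeral_eq_Suc All_less_Suc conj_ac)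

lemma all_less_7:
  "(\<forall>i<(7::nat). P i) \<longleftrightarrow> P 0 \<and> P 1 \<and> P 2 \<and> P 3 \<and> P 4 \<and> P 5 \<and> P 6"
  by (simp add: numeral_eq_Suc All_less_Suc conj_ac)

lemma induced_C6:
  assumes G: "simple_graph V E"
    and edges: "E v0 v1" "E v1 v2" "E v2 v3" "E v3 v4" "E v4 v5" "E v0 v5"
    and non_edges: "\<not> E v0 v2" "\<not> E v0 v3" "\<not> E v0 v4" "\<not> E v1 v3" "\<not> E v1 v4"
      "\<not> E v1 v5" "\<not> E v2 v4" "\<not> E v2 v5" "\<not> E v3 v5"
  shows "contains_induced V E 6 (cycle_graph 6)"
proof (rule contains_induced_of_list[OF G, of _ "[v0, v1, v2, v3, v4, v5]"])
  show "distinct [v0, v1, v2, v3, v4, v5]"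
    using edges non_edges simple_graph_sym[OF G] simple_graph_irrefl[OF G] by auto
  show "set [v0, v1, v2, v3, v4, v5] \<subseteq> V"
    using edges simple_graph_edge_in_V[OF G] by auto
  show "\<forall>i<6. \<forall>j<6. i < j \<longrightarrow>
      (E ([v0, v1, v2, v3, v4, v5] ! i) ([v0, v1, v2, v3, v4, v5] ! j) \<longleftrightarrow> cycle_graph 6 i j)"
    unfolding all_less_6 cycle_graph_def using edges non_edges by simp
qed (auto simp: cycle_graph_def mod_Suc)

lemma induced_X2:
  assumes G: "simple_graph V E"
    and edges: "E v0 v1" "E v1 v2" "E v2 v3" "E v0 v3" "E v0 v4" "E v1 v5" "E v2 v6"
    and non_edges: "\<not> E v0 v2" "\<not> E v0 v5" "\<not> E v0 v6" "\<not> E v1 v3" "\<not> E v1 v4"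
      "\<not> E v1 v6" "\<not> E v2 v4" "\<not> E v2 v5" "\<not> E v3 v4" "\<not> E v3 v5" "\<not> E v3 v6"
      "\<not> E v4 v5" "\<not> E v4 v6" "\<not> E v5 v6"
  shows "contains_induced V E 7 X2"
proof (rule contains_induced_of_list[OF G, of _ "[v0, v1, v2, v3, v4, v5, v6]"])
  show "distinct [v0, v1, v2, v3, v4, v5, v6]"
    using edges non_edges simple_graph_sym[OF G] simple_graph_irrefl[OF G] by auto
  show "set [v0, v1, v2, v3, v4, v5, v6] \<subseteq> V"
    using edges simple_graph_edge_in_V[OF G] by auto
  show "\<forall>i<7. \<forall>j<7. i < j \<longrightarrow>
      (E ([v0, v1, v2, v3, v4, v5, v6] ! i) ([v0, v1, v2, v3, v4, v5, v6] ! j) \<longleftrightarrow> X2 i j)"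
    unfolding all_less_7 X2_def graph_of_edges_def using edges non_edges by simp
qed (auto simp: X2_def graph_of_edges_def)

lemma induced_X3:
  assumes G: "simple_graph V E"
    and edges: "E v0 v1" "E v1 v2" "E v2 v3" "E v0 v3" "E v2 v4" "E v4 v5" "E v1 v5" "E v1 v6"
    and non_edges: "\<not> E v0 v2" "\<not> E v0 v4" "\<not> E v0 v5" "\<not> E v0 v6" "\<not> E v1 v3"
      "\<not> E v1 v4" "\<not> E v2 v5" "\<not> E v2 v6" "\<not> E v3 v4" "\<not> E v3 v5" "\<not> E v3 v6"
      "\<not> E v4 v6" "\<not> E v5 v6"
  shows "contains_induced V E 7 X3"
proof (rule contains_induced_of_list[OF G, of _ "[v0, v1, v2, v3, v4, v5, v6]"])
  show "distinct [v0, v1, v2, v3, v4, v5, v6]"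
    using edges non_edges simple_graph_sym[OF G] simple_graph_irrefl[OF G] by auto
  show "set [v0, v1, v2, v3, v4, v5, v6] \<subseteq> V"
    using edges simple_graph_edge_in_V[OF G] by auto
  show "\<forall>i<7. \<forall>j<7. i < j \<longrightarrow>
      (E ([v0, v1, v2, v3, v4, v5, v6] ! i) ([v0, v1, v2, v3, v4, v5, v6] ! j) \<longleftrightarrow> X3 i j)"
    unfolding all_less_7 X3_def graph_of_edges_def using edges non_edges by simp
qed (auto simp: X3_def graph_of_edges_def)

lemma triangle_free_non_edge:
  assumes G: "simple_graph V E" and no_K3: "\<not> contains_induced V E 3 K3"
    and "E x y" "E y z"
  shows "\<not> E x z"
proof
  assume "E x z"
  have "contains_induced V E 3 K3"
  proof (rule contains_induced_of_list[OF G, of _ "[x, y, z]"])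
    show "distinct [x, y, z]"
      using \<open>E x y\<close> \<open>E y z\<close> \<open>E x z\<close> simple_graph_irrefl[OF G] by auto
    show "set [x, y, z] \<subseteq> V"
      using \<open>E x y\<close> \<open>E y z\<close> simple_graph_edge_in_V[OF G] by auto
    show "\<forall>i<3. \<forall>j<3. i < j \<longrightarrow> (E ([x, y, z] ! i) ([x, y, z] ! j) \<longleftrightarrow> K3 i j)"
      using \<open>E x y\<close> \<open>E y z\<close> \<open>E x z\<close>
      by (auto simp: K3_def graph_of_edges_def less_Suc_eq numeral_eq_Suc)
  qed (auto simp: K3_def graph_of_edges_def)
  with no_K3 show False ..
qed

lemma nested_nbhds_no_C6:
  assumes G: "simple_graph V E" and no_K3: "\<not> contains_induced V E 3 K3"
    and no_C6: "\<not> contains_induced V E 6 (cycle_graph 6)"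
    and "\<not> E s t" and w: "w \<in> nbhd E s - nbhd E t" and w': "w' \<in> nbhd E s - nbhd E t"
    and Y: "Y \<subseteq> nbhd E t - nbhd E s"
  shows "nbhd E w \<inter> Y \<subseteq> nbhd E w' \<inter> Y \<or> nbhd E w' \<inter> Y \<subseteq> nbhd E w \<inter> Y"
proof (rule ccontr)
  assume "\<not> ?thesis"
  then obtain a a' where a: "a \<in> Y" "E w a" "\<not> E w' a" and a': "a' \<in> Y" "E w' a'" "\<not> E w a'"
    unfolding nbhd_def by blast
  note sym = simple_graph_sym[OF G] and no_tri = triangle_free_non_edge[OF G no_K3]
  have "contains_induced V E 6 (cycle_graph 6)"
  proof (rule induced_C6[OF G, of a w s w' a' t])
    show "\<not> E a a'" using no_tri Y a(1) a'(1) sym unfolding nbhd_def by blast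
    show "\<not> E w w'" using no_tri w w' sym unfolding nbhd_def by blast
  qed (use a a' w w' Y \<open>\<not> E s t\<close> sym in \<open>auto simp: nbhd_def\<close>)
  with no_C6 show False ..
qed

lemma nbhd_subset_no_C6:
  assumes G: "simple_graph V E" and no_K3: "\<not> contains_induced V E 3 K3"
    and no_C6: "\<not> contains_induced V E 6 (cycle_graph 6)"
    and "\<not> E s t" and w: "w \<in> nbhd E s - nbhd E t" and w': "w' \<in> nbhd E s - nbhd E t"
    and Y: "Y \<subseteq> nbhd E t - nbhd E s"
    and x: "x \<in> nbhd E t - nbhd E s" "E w' x" "\<not> E w x"
  shows "nbhd E w \<inter> Y \<subseteq> nbhd E w' \<inter> Y"
proof -
  have "nbhd E w \<inter> insert x Y \<subseteq> nbhd E w' \<inter> insert x Y"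
    using nested_nbhds_no_C6[OF G no_K3 no_C6 \<open>\<not> E s t\<close> w w', of "insert x Y"] Y x
    by (auto simp: nbhd_def)
  then show ?thesis by blast
qed

lemma nested_nbhds_no_X3:
  assumes G: "simple_graph V E" and no_K3: "\<not> contains_induced V E 3 K3"
    and no_X3: "\<not> contains_induced V E 7 X3"
    and "E s t" "E s r" and u: "u \<in> nbhd E s - nbhd E r" and u': "u' \<in> nbhd E s - nbhd E r"
    and Y: "Y \<subseteq> nbhd E t - nbhd E r"
  shows "nbhd E u \<inter> Y \<subseteq> nbhd E u' \<inter> Y \<or> nbhd E u' \<inter> Y \<subseteq> nbhd E u \<inter> Y"
proof (rule ccontr)
  assume "\<not> ?thesis"
  then obtain b b' where b: "b \<in> Y" "E u b" "\<not> E u' b" and b': "b' \<in> Y" "E u' b'" "\<not> E u b'"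
    unfolding nbhd_def by blast
  note sym = simple_graph_sym[OF G] and no_tri = triangle_free_non_edge[OF G no_K3]
  have "contains_induced V E 7 X3"
  proof (rule induced_X3[OF G, of u s t b b' u' r])
    show "\<not> E u t" "\<not> E u u'" "\<not> E s b" "\<not> E s b'" "\<not> E t u'" "\<not> E t r" "\<not> E b b'"
      using no_tri sym u u' b(1) b'(1) Y \<open>E s t\<close> \<open>E s r\<close> unfolding nbhd_def by blast+
  qed (use b b' u u' Y \<open>E s t\<close> \<open>E s r\<close> sym in \<open>auto simp: nbhd_def\<close>)
  with no_X3 show False ..
qed

lemma nbhd_subset_no_X2:
  assumes G: "simple_graph V E" and no_K3: "\<not> contains_induced V E 3 K3"
    and no_X2: "\<not> contains_induced V E 7 X2"
    and edges: "E s t" "E t z" "E s u" "E u x" "E s u'"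
    and non_edges: "\<not> E x t" "\<not> E x z" "\<not> E u z" "\<not> E u' x" "\<not> E u' z"
    and Y: "Y \<subseteq> nbhd E t - nbhd E x"
  shows "nbhd E u \<inter> Y \<subseteq> nbhd E u' \<inter> Y"
proof (rule ccontr)
  assume "\<not> ?thesis"
  then obtain b where b: "b \<in> Y" "E u b" "\<not> E u' b"
    unfolding nbhd_def by blast
  note sym = simple_graph_sym[OF G] and no_tri = triangle_free_non_edge[OF G no_K3]
  have "contains_induced V E 7 X2"
  proof (rule induced_X2[OF G, of u s t b x u' z])
    show "\<not> E u t" "\<not> E u u'" "\<not> E s b" "\<not> E s x" "\<not> E s z" "\<not> E t u'" "\<not> E b z"
      using no_tri sym edges b(1) Y unfolding nbhd_def by blast+
  qed (use b edges non_edges Y sym in \<open>auto simp: nbhd_def\<close>)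
  with no_X2 show False ..
qed

lemma mod_eq_iff_eq_of_abs_diff_less:
  fixes k l n :: int
  assumes "\<bar>k - l\<bar> < n"
  shows "k mod n = l mod n \<longleftrightarrow> k = l"
proof
  assume "k mod n = l mod n"
  then have "n dvd k - l" by (simp add: mod_eq_dvd_iff)
  with assms show "k = l" using dvd_imp_le_int[of "k - l" n] by fastforce
qed simp

lemma cyc_index_eq_iff:
  assumes "\<bar>k - l\<bar> < int m"
  shows "nat (k mod int m) = nat (l mod int m) \<longleftrightarrow> k = l"
  using assms mod_eq_iff_eq_of_abs_diff_less[OF assms] by (auto simp: nat_eq_iff2)

lemma cyc_index_succ:
  assumes "0 < m"
  shows "Suc (nat (k mod int m)) mod m = nat ((k + 1) mod int m)"
proof -
  have "int (Suc (nat (k mod int m)) mod m) = (k mod int m + 1) mod int m"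
    using assms by (simp add: zmod_int add.commute)
  also have "\<dots> = (k + 1) mod int m" by (simp add: mod_add_left_eq)
  finally show ?thesis by linarith
qed

lemma cyc_in_image: "0 < m \<Longrightarrow> cyc c m k \<in> c ` {0..<m}"
  unfolding cyc_def by (simp add: nat_less_iff)

lemma cyc_eq_iff:
  assumes "inj_on c {0..<m}" and "\<bar>k - l\<bar> < int m"
  shows "cyc c m k = cyc c m l \<longleftrightarrow> k = l"
  using assms inj_on_eq_iff[OF assms(1), of "nat (k mod int m)" "nat (l mod int m)"]
  by (auto simp: cyc_def nat_less_iff cyc_index_eq_iff)

lemma hole_adj_cyc_iff:
  assumes hole: "is_hole V E c m" and dist: "\<bar>k - l\<bar> + 2 \<le> int m"
  shows "E (cyc c m k) (cyc c m l) \<longleftrightarrow> \<bar>k - l\<bar> = 1"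
proof -
  define a b where "a = nat (k mod int m)" and "b = nat (l mod int m)"
  have "0 < m" using dist by linarith
  then have "a < m" "b < m" unfolding a_def b_def by (simp_all add: nat_less_iff)
  then have "E (cyc c m k) (cyc c m l) \<longleftrightarrow> b = Suc a mod m \<or> a = Suc b mod m"
    using hole by (simp add: is_hole_def cycle_graph_def cyc_def a_def b_def)
  also have "\<dots> \<longleftrightarrow> l = k + 1 \<or> k = l + 1"
    using \<open>0 < m\<close> dist
    by (simp add: a_def b_def cyc_index_succ cyc_index_eq_iff)
  also have "\<dots> \<longleftrightarrow> \<bar>k - l\<bar> = 1" by linarith
  finally show ?thesis .
qed

lemma adj_cyc_iff_mem_hole_nbhd:
  assumes "nbhd E v \<inter> c ` {0..<m} = S" and "0 < m"
  shows "E v (cyc c m k) \<longleftrightarrow> cyc c m k \<in> S"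
  using assms cyc_in_image[of m c k] unfolding nbhd_def by blast

lemma Aset_adj_cyc_iff:
  assumes "v \<in> Aset V E c m j" and "inj_on c {0..<m}" and "\<bar>k - j\<bar> + 1 < int m"
  shows "E v (cyc c m k) \<longleftrightarrow> \<bar>k - j\<bar> = 1"
proof -
  have "E v (cyc c m k) \<longleftrightarrow> cyc c m k \<in> {cyc c m (j - 1), cyc c m (j + 1)}"
    using assms by (intro adj_cyc_iff_mem_hole_nbhd) (auto simp: Aset_def)
  also have "\<dots> \<longleftrightarrow> k = j - 1 \<or> k = j + 1"
    using assms(3) by (simp add: cyc_eq_iff[OF assms(2)])
  finally show ?thesis by linarith
qed

lemma Bset_adj_cyc_iff:
  assumes "v \<in> Bset V E c m j" and "inj_on c {0..<m}" and "\<bar>k - j\<bar> < int m"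
  shows "E v (cyc c m k) \<longleftrightarrow> k = j"
proof -
  have "E v (cyc c m k) \<longleftrightarrow> cyc c m k \<in> {cyc c m j}"
    using assms by (intro adj_cyc_iff_mem_hole_nbhd) (auto simp: Bset_def)
  then show ?thesis
    using assms(3) by (simp add: cyc_eq_iff[OF assms(2)])
qed

lemma hole_length_ge_10:
  assumes "almost_bipartite_permutation V E" and "is_hole V E c m"
  shows "10 \<le> m"
proof -
  have "contains_induced V E m (cycle_graph m)" "5 \<le> m"
    using assms(2) unfolding is_hole_def contains_induced_def by blast+
  with assms(1) show ?thesis unfolding almost_bipartite_permutation_def by force
qed

lemma nested_nbhds_near_induced_path:
  fixes y :: "int \<Rightarrow> 'a" and A B :: "int \<Rightarrow> 'a set"
  assumes G: "simple_graph V E" and no_K3: "\<not> contains_induced V E 3 K3"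
    and no_C6: "\<not> contains_induced V E 6 (cycle_graph 6)"
    and no_X2: "\<not> contains_induced V E 7 X2" and no_X3: "\<not> contains_induced V E 7 X3"
    and path: "\<And>k l. \<bar>k\<bar> \<le> 3 \<Longrightarrow> \<bar>l\<bar> \<le> 3 \<Longrightarrow> E (y k) (y l) \<longleftrightarrow> \<bar>k - l\<bar> = 1"
    and A: "\<And>v j k. v \<in> A j \<Longrightarrow> \<bar>j\<bar> \<le> 3 \<Longrightarrow> \<bar>k\<bar> \<le> 3 \<Longrightarrow> E v (y k) \<longleftrightarrow> \<bar>k - j\<bar> = 1"
    and B: "\<And>v j k. v \<in> B j \<Longrightarrow> \<bar>j\<bar> \<le> 3 \<Longrightarrow> \<bar>k\<bar> \<le> 3 \<Longrightarrow> E v (y k) \<longleftrightarrow> k = j"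
  shows "(\<forall>w \<in> B (-2) \<union> A (-1). \<forall>w' \<in> B (-2) \<union> A (-1).
            nbhd E w \<inter> A 0 \<subseteq> nbhd E w' \<inter> A 0 \<or> nbhd E w' \<inter> A 0 \<subseteq> nbhd E w \<inter> A 0)
       \<and> (\<forall>w \<in> B (-2). \<forall>w' \<in> A (-1). nbhd E w \<inter> A 0 \<subseteq> nbhd E w' \<inter> A 0)
       \<and> (\<forall>u \<in> A (-2) \<union> B (-1). \<forall>u' \<in> A (-2) \<union> B (-1).
            nbhd E u \<inter> B 0 \<subseteq> nbhd E u' \<inter> B 0 \<or> nbhd E u' \<inter> B 0 \<subseteq> nbhd E u \<inter> B 0)
       \<and> (\<forall>u \<in> A (-2). \<forall>u' \<in> B (-1). nbhd E u \<inter> B 0 \<subseteq> nbhd E u' \<inter> B 0)"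
proof (intro conjI)
  note sym = simple_graph_sym[OF G]
  have A': "E (y k) v \<longleftrightarrow> \<bar>k - j\<bar> = 1" if "v \<in> A j" "\<bar>j\<bar> \<le> 3" "\<bar>k\<bar> \<le> 3" for v j k
    using A[OF that] sym by blast
  have B': "E (y k) v \<longleftrightarrow> k = j" if "v \<in> B j" "\<bar>j\<bar> \<le> 3" "\<bar>k\<bar> \<le> 3" for v j k
    using B[OF that] sym by blast
  have W: "B (-2) \<union> A (-1) \<subseteq> nbhd E (y (-2)) - nbhd E (y 1)"
    by (auto simp: nbhd_def A' B')
  have A0: "A 0 \<subseteq> nbhd E (y 1) - nbhd E (y (-2))"
    by (auto simp: nbhd_def A')
  have U: "A (-2) \<union> B (-1) \<subseteq> nbhd E (y (-1)) - nbhd E (y (-2))"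
    by (auto simp: nbhd_def A' B')
  have B0: "B 0 \<subseteq> nbhd E (y 0) - nbhd E (y (-2))" "B 0 \<subseteq> nbhd E (y 0) - nbhd E (y (-3))"
    by (auto simp: nbhd_def B')
  have "\<not> E (y (-2)) (y 1)" "E (y (-1)) (y 0)" "E (y (-1)) (y (-2))" using path by simp_all
  show "\<forall>w \<in> B (-2) \<union> A (-1). \<forall>w' \<in> B (-2) \<union> A (-1).
      nbhd E w \<inter> A 0 \<subseteq> nbhd E w' \<inter> A 0 \<or> nbhd E w' \<inter> A 0 \<subseteq> nbhd E w \<inter> A 0"
    using nested_nbhds_no_C6[OF G no_K3 no_C6 \<open>\<not> E (y (-2)) (y 1)\<close> _ _ A0] W by blast
  have y0: "y 0 \<in> nbhd E (y 1) - nbhd E (y (-2))" using path sym by (simp add: nbhd_def)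
  show "\<forall>w \<in> B (-2). \<forall>w' \<in> A (-1). nbhd E w \<inter> A 0 \<subseteq> nbhd E w' \<inter> A 0"
  proof (intro ballI)
    fix w w' assume w: "w \<in> B (-2)" and w': "w' \<in> A (-1)"
    have "E w' (y 0)" "\<not> E w (y 0)" using A[OF w'] B[OF w] by simp_all
    with w w' W show "nbhd E w \<inter> A 0 \<subseteq> nbhd E w' \<inter> A 0"
      using nbhd_subset_no_C6[OF G no_K3 no_C6 \<open>\<not> E (y (-2)) (y 1)\<close> _ _ A0 y0] by blast
  qed
  show "\<forall>u \<in> A (-2) \<union> B (-1). \<forall>u' \<in> A (-2) \<union> B (-1).
      nbhd E u \<inter> B 0 \<subseteq> nbhd E u' \<inter> B 0 \<or> nbhd E u' \<inter> B 0 \<subseteq> nbhd E u \<inter> B 0"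
    using nested_nbhds_no_X3[OF G no_K3 no_X3 \<open>E (y (-1)) (y 0)\<close> \<open>E (y (-1)) (y (-2))\<close>
        _ _ B0(1)] U by blast
  show "\<forall>u \<in> A (-2). \<forall>u' \<in> B (-1). nbhd E u \<inter> B 0 \<subseteq> nbhd E u' \<inter> B 0"
  proof (intro ballI)
    fix u u' assume "u \<in> A (-2)" "u' \<in> B (-1)"
    then show "nbhd E u \<inter> B 0 \<subseteq> nbhd E u' \<inter> B 0"
      using nbhd_subset_no_X2[OF G no_K3 no_X2, of "y (-1)" "y 0" "y 1" u "y (-3)" u' "B 0"] B0(2)
      by (simp add: path A A' B B')
  qed
qed

lemma abs_diff_window:
  fixes d :: int
  assumes "\<bar>d\<bar> = 1"
  shows "\<bar>(i + k * d) - (i + l * d)\<bar> = \<bar>k - l\<bar>"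
proof -
  have "(i + k * d) - (i + l * d) = (k - l) * d" by (simp add: algebra_simps)
  then show ?thesis using assms by (simp add: abs_mult)
qed

theorem proposition3p6:
  fixes V :: "'a set" and E :: "'a \<Rightarrow> 'a \<Rightarrow> bool" and c :: "nat \<Rightarrow> 'a"
    and m :: nat and i p q :: int
  assumes "simple_graph V E" and "connected_graph V E"
    and "almost_bipartite_permutation V E"
    and "is_hole V E c m"
    and "\<forall>c' m'. is_hole V E c' m' \<longrightarrow> m \<le> m'"
    and "0 \<le> i" and "i < int m"
    and "(p, q) \<in> {(i - 2, i - 1), (i + 2, i + 1)}"
  shows "(\<forall>w \<in> Bset V E c m p \<union> Aset V E c m q. \<forall>w' \<in> Bset V E c m p \<union> Aset V E c m q.
            nbhd E w \<inter> Aset V E c m i \<subseteq> nbhd E w' \<inter> Aset V E c m i \<or>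
            nbhd E w' \<inter> Aset V E c m i \<subseteq> nbhd E w \<inter> Aset V E c m i)
       \<and> (\<forall>w \<in> Bset V E c m p. \<forall>w' \<in> Aset V E c m q.
            nbhd E w \<inter> Aset V E c m i \<subseteq> nbhd E w' \<inter> Aset V E c m i)
       \<and> (\<forall>u \<in> Aset V E c m p \<union> Bset V E c m q. \<forall>u' \<in> Aset V E c m p \<union> Bset V E c m q.
            nbhd E u \<inter> Bset V E c m i \<subseteq> nbhd E u' \<inter> Bset V E c m i \<or>
            nbhd E u' \<inter> Bset V E c m i \<subseteq> nbhd E u \<inter> Bset V E c m i)
       \<and> (\<forall>u \<in> Aset V E c m p. \<forall>u' \<in> Bset V E c m q.
            nbhd E u \<inter> Bset V E c m i \<subseteq> nbhd E u' \<inter> Bset V E c m i)"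
proof -
  note G = assms(1) and hole = assms(4)
  have no_K3: "\<not> contains_induced V E 3 K3" and no_X2: "\<not> contains_induced V E 7 X2"
    and no_X3: "\<not> contains_induced V E 7 X3"
    and no_C6: "\<not> contains_induced V E 6 (cycle_graph 6)"
    using assms(3) unfolding almost_bipartite_permutation_def by auto
  have inj: "inj_on c {0..<m}" using hole by (simp add: is_hole_def)
  have m: "10 \<le> m" using hole_length_ge_10[OF assms(3) hole] .
  obtain d :: int where d: "\<bar>d\<bar> = 1" and p: "p = i + (-2) * d" and q: "q = i + (-1) * d"
    using assms(8) by (auto intro: that[of 1] that[of "-1"])
  let ?y = "\<lambda>k. cyc c m (i + k * d)"
  note dist = abs_diff_window[OF d, of i]
  have "E (?y k) (?y l) \<longleftrightarrow> \<bar>k - l\<bar> = 1" if "\<bar>k\<bar> \<le> 3" "\<bar>l\<bar> \<le> 3" for k l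
    using hole_adj_cyc_iff[OF hole, of "i + k * d" "i + l * d"] dist that m by simp
  moreover have "E v (?y k) \<longleftrightarrow> \<bar>k - j\<bar> = 1"
    if "v \<in> Aset V E c m (i + j * d)" "\<bar>j\<bar> \<le> 3" "\<bar>k\<bar> \<le> 3" for v j k
    using Aset_adj_cyc_iff[OF that(1) inj, of "i + k * d"] dist that(2,3) m by simp
  moreover have "E v (?y k) \<longleftrightarrow> k = j"
    if "v \<in> Bset V E c m (i + j * d)" "\<bar>j\<bar> \<le> 3" "\<bar>k\<bar> \<le> 3" for v j k
    using Bset_adj_cyc_iff[OF that(1) inj, of "i + k * d"] dist[of k j] that(2,3) m d by auto
  ultimately show ?thesis
    using nested_nbhds_near_induced_path[OF G no_K3 no_C6 no_X2 no_X3, of ?y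
        "\<lambda>j. Aset V E c m (i + j * d)" "\<lambda>j. Bset V E c m (i + j * d)"]
    unfolding p q by simp
qed

end
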